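(* For all integers $D$ and $a$ there exists $T$ such that if $G$ is a clique-sum of graphs each having at most $a$ vertices of degree greater than $D$, then $G$ has $\infty$-admissibility at most $T$.
   Context: All graphs are finite and simple. Given an ordering $v_1,\ldots,v_n$ of $V(G)$, the $\infty$-backconnectivity of $v_k$ is the maximum number of paths (of any length) from $v_k$ to $\{v_1,\ldots,v_{k-1}\}$ that pairwise intersect only in $v_k$. The $\infty$-admissibility of the ordering is the maximum $\infty$-backconnectivity of its vertices, and the $\infty$-admissibility of $G$ is the minimum over all orderings. A clique-sum of $G_1$ and $G_2$ is obtained by identifying the vertices of a clique in $G_1$ with those of an equal-size clique in $G_2$ and possibly deleting some edges; a clique-sum of several graphs is obtained by repeated clique-sums. *)

theory Defs
  imports Main
begin

definition graph :: "'a set \<Rightarrow> 'a set set \<Rightarrow> bool" where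
  "graph V E \<longleftrightarrow> finite V \<and> (\<forall>e\<in>E. \<exists>u v. e = {u, v} \<and> u \<noteq> v \<and> u \<in> V \<and> v \<in> V)"

definition degree :: "'a set set \<Rightarrow> 'a \<Rightarrow> nat" where
  "degree E v = card {u. {u, v} \<in> E}"

definition is_clique :: "'a set set \<Rightarrow> 'a set \<Rightarrow> bool" where
  "is_clique E K \<longleftrightarrow> (\<forall>u\<in>K. \<forall>v\<in>K. u \<noteq> v \<longrightarrow> {u, v} \<in> E)"

text \<open>Repeated clique-sums of graphs satisfying P. Vertices are labelled so that
  the two summands share exactly the identified clique K; afterwards any set of
  edges inside K may be deleted.\<close>
inductive clique_sum_of :: "('a set \<Rightarrow> 'a set set \<Rightarrow> bool) \<Rightarrow> 'a set \<Rightarrow> 'a set set \<Rightarrow> bool"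
  for P where
  base: "graph V E \<Longrightarrow> P V E \<Longrightarrow> clique_sum_of P V E"
| sum: "clique_sum_of P V1 E1 \<Longrightarrow> clique_sum_of P V2 E2 \<Longrightarrow> K = V1 \<inter> V2 \<Longrightarrow>
        is_clique E1 K \<Longrightarrow> is_clique E2 K \<Longrightarrow> F \<subseteq> {e. e \<subseteq> K} \<Longrightarrow>
        clique_sum_of P (V1 \<union> V2) ((E1 \<union> E2) - F)"

definition is_path :: "'a set \<Rightarrow> 'a set set \<Rightarrow> 'a list \<Rightarrow> bool" where
  "is_path V E p \<longleftrightarrow> p \<noteq> [] \<and> distinct p \<and> set p \<subseteq> V \<and>
     (\<forall>i. Suc i < length p \<longrightarrow> {p ! i, p ! Suc i} \<in> E)"

definition fan :: "'a set \<Rightarrow> 'a set set \<Rightarrow> 'a \<Rightarrow> 'a set \<Rightarrow> 'a list set \<Rightarrow> bool" where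
  "fan V E v S Ps \<longleftrightarrow>
     (\<forall>p\<in>Ps. is_path V E p \<and> hd p = v \<and> last p \<in> S) \<and>
     (\<forall>p\<in>Ps. \<forall>q\<in>Ps. p \<noteq> q \<longrightarrow> set p \<inter> set q = {v})"

definition is_ordering :: "'a set \<Rightarrow> 'a list \<Rightarrow> bool" where
  "is_ordering V vs \<longleftrightarrow> distinct vs \<and> set vs = V"

text \<open>infinity-backconnectivity of the k-th vertex (0-indexed) of ordering vs.\<close>
definition backconn :: "'a set \<Rightarrow> 'a set set \<Rightarrow> 'a list \<Rightarrow> nat \<Rightarrow> nat" where
  "backconn V E vs k = Max {card Ps | Ps. fan V E (vs ! k) (set (take k vs)) Ps}"

definition adm_ordering :: "'a set \<Rightarrow> 'a set set \<Rightarrow> 'a list \<Rightarrow> nat" where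
  "adm_ordering V E vs = Max (insert 0 {backconn V E vs k | k. k < length vs})"

definition inf_admissibility :: "'a set \<Rightarrow> 'a set set \<Rightarrow> nat" where
  "inf_admissibility V E = Min {adm_ordering V E vs | vs. is_ordering V vs}"

end

theory Submission
  imports Defs
begin

text \<open>By induction along the clique-sum we show more than bounded admissibility: for every clique Q
  there is an ordering that lists Q first and in which every later vertex has
  \<open>\<infinity>\<close>-backconnectivity at most T = 2a + D. For a single summand, put Q first, then the at most a
  vertices of degree greater than D, then the rest: a clique has at most a + D + 1 vertices, so the
  vertices of the first two blocks have at most 2a + D predecessors, and each later vertex has at most
  D neighbours, which bounds every fan at it.

  For a clique-sum of G1 and G2 along K = V1 \<inter> V2 with Q \<subseteq> V1, follow an ordering of G1 with Q first
  by an ordering of G2 with K first, with K removed. A fan at a vertex of G1 stays a fan in G1 after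
  deleting all vertices outside V1, because a path can leave V1 only through the clique K and can then
  be shortcut inside K. A fan at a vertex of G2 - K, cut off where it first meets an earlier vertex,
  avoids V1 - K up to its endpoint and is therefore a fan in G2. Deleting edges inside K only shrinks
  fans. Taking Q empty gives the theorem.\<close>

lemma graph_finite: "graph V E \<Longrightarrow> finite V"
  unfolding graph_def by simp

lemma graph_edges_subset: "graph V E \<Longrightarrow> \<forall>e\<in>E. e \<subseteq> V"
  unfolding graph_def by auto

lemma finite_neighbours:
  assumes "graph V E" shows "finite {u. {u, v} \<in> E}"
proof (rule finite_subset[OF _ graph_finite[OF assms]])
  show "{u. {u, v} \<in> E} \<subseteq> V" using graph_edges_subset[OF assms] by blast
qed

lemma graph_clique_sum:
  assumes "graph V1 E1" "graph V2 E2" shows "graph (V1 \<union> V2) (E1 \<union> E2 - F)"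
  unfolding graph_def
proof (intro conjI ballI)
  show "finite (V1 \<union> V2)" using assms by (simp add: graph_finite)
  fix e assume "e \<in> E1 \<union> E2 - F"
  then consider "e \<in> E1" | "e \<in> E2" by blast
  then obtain u v where "e = {u, v}" "u \<noteq> v" "u \<in> V1 \<union> V2" "v \<in> V1 \<union> V2"
  proof cases
    case 1
    then obtain u v where "e = {u, v}" "u \<noteq> v" "u \<in> V1" "v \<in> V1"
      using assms(1) unfolding graph_def by blast
    then show thesis using that by blast
  next
    case 2
    then obtain u v where "e = {u, v}" "u \<noteq> v" "u \<in> V2" "v \<in> V2"
      using assms(2) unfolding graph_def by blast
    then show thesis using that by blast
  qed
  then show "\<exists>u v. e = {u, v} \<and> u \<noteq> v \<and> u \<in> V1 \<union> V2 \<and> v \<in> V1 \<union> V2" by blast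
qed

lemma is_clique_mono: "is_clique E Q \<Longrightarrow> E \<subseteq> E' \<Longrightarrow> is_clique E' Q"
  unfolding is_clique_def by blast

lemma hd_filter: "xs \<noteq> [] \<Longrightarrow> P (hd xs) \<Longrightarrow> hd (filter P xs) = hd xs"
  by (cases xs) auto

lemma last_filter: "xs \<noteq> [] \<Longrightarrow> P (last xs) \<Longrightarrow> last (filter P xs) = last xs"
  using hd_filter[of "rev xs" P] by (simp add: rev_filter flip: hd_rev)

lemma nth_notin_set_take: "distinct xs \<Longrightarrow> k < length xs \<Longrightarrow> xs ! k \<notin> set (take k xs)"
  by (metis distinct_take id_take_nth_drop not_distinct_conv_prefix)

lemma is_path_iff_successively:
  "is_path V E p \<longleftrightarrow> p \<noteq> [] \<and> distinct p \<and> set p \<subseteq> V \<and> successively (\<lambda>x y. {x, y} \<in> E) p"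
  unfolding is_path_def successively_conv_nth by auto

lemma is_path_mono: "is_path V E p \<Longrightarrow> E \<subseteq> E' \<Longrightarrow> is_path V E' p"
  unfolding is_path_def by blast

lemma is_path_take: "is_path V E p \<Longrightarrow> 0 < n \<Longrightarrow> is_path V E (take n p)"
  unfolding is_path_def by (auto dest: in_set_takeD)

lemma is_path_first_entry:
  assumes p: "is_path V E p" and S: "last p \<in> S"
  obtains q where "is_path V E q" "set q \<subseteq> set p" "hd q = hd p" "last q \<in> S"
    "\<forall>x\<in>set (butlast q). x \<notin> S"
proof
  define n where "n = length (takeWhile (\<lambda>x. x \<notin> S) p)"
  have ne: "p \<noteq> []" using p unfolding is_path_def by simp
  have "takeWhile (\<lambda>x. x \<notin> S) p \<noteq> p"
    using S ne last_in_set unfolding takeWhile_eq_all_conv by blast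
  then have n: "n < length p"
    unfolding n_def by (metis length_takeWhile_le le_neq_implies_less takeWhile_eq_take take_all)
  show "is_path V E (take (Suc n) p)" using is_path_take[OF p] by simp
  show "set (take (Suc n) p) \<subseteq> set p" by (rule set_take_subset)
  show "hd (take (Suc n) p) = hd p" using ne by simp
  show "last (take (Suc n) p) \<in> S"
    using n nth_length_takeWhile[of "\<lambda>x. x \<notin> S" p] by (simp add: n_def take_Suc_conv_app_nth)
  show "\<forall>x\<in>set (butlast (take (Suc n) p)). x \<notin> S"
    using n by (auto simp: butlast_take n_def simp flip: takeWhile_eq_take dest: set_takeWhileD)
qed

text \<open>The second conjunct strengthens the induction: a path that returns to V1 from outside enters it
  in the separator V1 \<inter> V2, which is a clique of E1 and so supplies the shortcut edge.\<close>
lemma successively_filter_side: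
  assumes E1: "\<forall>e\<in>E1. e \<subseteq> V1" and E2: "\<forall>e\<in>E2. e \<subseteq> V2" and K: "is_clique E1 (V1 \<inter> V2)"
  shows "distinct p \<Longrightarrow> successively (\<lambda>x y. {x, y} \<in> E1 \<union> E2) p \<Longrightarrow> last p \<in> V1 \<Longrightarrow> p \<noteq> [] \<Longrightarrow>
    successively (\<lambda>x y. {x, y} \<in> E1) (filter (\<lambda>x. x \<in> V1) p)
    \<and> (hd p \<notin> V1 \<longrightarrow> hd (filter (\<lambda>x. x \<in> V1) p) \<in> V2)"
proof (induction p rule: induct_list012)
  case (3 x y ys)
  define f where "f = filter (\<lambda>x. x \<in> V1) (y # ys)"
  have IH: "successively (\<lambda>x y. {x, y} \<in> E1) f" "y \<notin> V1 \<Longrightarrow> hd f \<in> V2"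
    using 3 by (simp_all add: f_def)
  have "last (y # ys) \<in> V1" using "3.prems"(3) by simp
  then have "last (y # ys) \<in> set f" unfolding f_def set_filter using last_in_set by blast
  then have "f \<noteq> []" by auto
  moreover have "set f \<subseteq> V1 \<inter> set (y # ys)" unfolding f_def by auto
  ultimately have f: "f \<noteq> []" "hd f \<in> V1" "hd f \<in> set (y # ys)"
    using hd_in_set[of f] by blast+
  have edge: "{x, y} \<in> E1 \<union> E2" using "3.prems"(2) by simp
  have crossing: "\<And>u w. {u, w} \<in> E1 \<union> E2 \<Longrightarrow> u \<in> V1 \<Longrightarrow> w \<notin> V1 \<Longrightarrow> u \<in> V2"
    using E1 E2 by blast
  show ?case
  proof (cases "x \<in> V1")
    case True
    have "x \<noteq> hd f" using "3.prems"(1) f(3) by auto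
    moreover have "hd f = y \<and> {x, y} \<in> E1 \<or> x \<in> V2 \<and> hd f \<in> V2"
      using edge E2 IH(2) crossing[OF edge True] by (cases "y \<in> V1") (auto simp: f_def)
    ultimately have "{x, hd f} \<in> E1"
      using K True f(2) unfolding is_clique_def by blast
    moreover have "filter (\<lambda>x. x \<in> V1) (x # y # ys) = x # f" using True by (simp add: f_def)
    ultimately show ?thesis using True IH(1) f(1) by (simp add: successively_Cons)
  next
    case False
    have "hd f \<in> V2"
      using IH(2) crossing[OF edge[unfolded insert_commute[of x]] _ False] by (cases "y \<in> V1") (auto simp: f_def)
    moreover have "filter (\<lambda>x. x \<in> V1) (x # y # ys) = f" using False by (simp add: f_def)
    ultimately show ?thesis using False IH(1) by simp
  qed
qed simp_all

lemma is_path_filter_side: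
  assumes "\<forall>e\<in>E1. e \<subseteq> V1" "\<forall>e\<in>E2. e \<subseteq> V2" "is_clique E1 (V1 \<inter> V2)"
    and p: "is_path V (E1 \<union> E2) p" "last p \<in> V1"
  shows "is_path V1 E1 (filter (\<lambda>x. x \<in> V1) p)"
proof -
  have "p \<noteq> []" "distinct p" "successively (\<lambda>x y. {x, y} \<in> E1 \<union> E2) p"
    using p(1) unfolding is_path_iff_successively by auto
  then have "successively (\<lambda>x y. {x, y} \<in> E1) (filter (\<lambda>x. x \<in> V1) p)"
    using successively_filter_side[OF assms(1-3)] p(2) by blast
  moreover have "last p \<in> set (filter (\<lambda>x. x \<in> V1) p)" using \<open>p \<noteq> []\<close> p(2) by simp
  then have "filter (\<lambda>x. x \<in> V1) p \<noteq> []" by (metis empty_iff list.set(1))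
  ultimately show ?thesis using \<open>distinct p\<close> unfolding is_path_iff_successively by auto
qed

lemma is_path_other_side:
  assumes E1: "\<forall>e\<in>E1. e \<subseteq> V1" and E2: "\<forall>e\<in>E2. e \<subseteq> V2"
    and p: "is_path (V1 \<union> V2) (E1 \<union> E2) p" and hd: "hd p \<notin> V1"
    and butlast: "\<forall>x\<in>set (butlast p). x \<notin> V1"
  shows "is_path V2 E2 p"
proof -
  have ne: "p \<noteq> []" using p unfolding is_path_def by simp
  have early: "p ! i \<notin> V1" if "Suc i < length p" for i
    using butlast that nth_butlast[of i p] nth_mem[of i "butlast p"] by simp
  have edges: "{p ! i, p ! Suc i} \<in> E2" if "Suc i < length p" for i
    using p early[OF that] that E1 unfolding is_path_def by blast
  have "p ! i \<in> V2" if "i < length p" for i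
  proof (cases "p ! i \<in> V1")
    case True
    then obtain j where "i = Suc j" using hd ne by (cases i) (auto simp: hd_conv_nth)
    then show ?thesis using edges[of j] that E2 by auto
  next
    case False
    then show ?thesis using p nth_mem[OF that] unfolding is_path_def by auto
  qed
  then show ?thesis using p edges unfolding is_path_def by (auto simp: in_set_conv_nth)
qed

lemma fan_mono: "fan V E v S Ps \<Longrightarrow> E \<subseteq> E' \<Longrightarrow> fan V E' v S Ps"
  unfolding fan_def using is_path_mono by blast

lemma fan_image:
  assumes fan: "fan V E v S Ps" and "v \<notin> S'"
    and f: "\<And>p. p \<in> Ps \<Longrightarrow> is_path V' E' (f p) \<and> set (f p) \<subseteq> set p \<and> hd (f p) = v \<and> last (f p) \<in> S'"
  shows "fan V' E' v S' (f ` Ps)" "card (f ` Ps) = card Ps"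
proof -
  have ne: "f p \<noteq> []" if "p \<in> Ps" for p using f[OF that] unfolding is_path_def by simp
  have v: "v \<in> set (f p)" if "p \<in> Ps" for p using f[OF that] hd_in_set[OF ne[OF that]] by simp
  have disj: "set (f p) \<inter> set (f q) \<subseteq> {v}" if "p \<in> Ps" "q \<in> Ps" "p \<noteq> q" for p q
    using fan f that unfolding fan_def by blast
  show "fan V' E' v S' (f ` Ps)"
    unfolding fan_def
  proof (intro conjI ballI impI)
    fix a b assume "a \<in> f ` Ps" "b \<in> f ` Ps" "a \<noteq> b"
    then obtain p q where "p \<in> Ps" "q \<in> Ps" "p \<noteq> q" "a = f p" "b = f q" by blast
    then show "set a \<inter> set b = {v}" using disj v by blast
  qed (use f in auto)
  have "inj_on f Ps"
  proof (rule inj_onI, rule ccontr)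
    fix p q assume pq: "p \<in> Ps" "q \<in> Ps" "f p = f q" "p \<noteq> q"
    then have "last (f p) = v" using disj[OF pq(1,2,4)] ne[OF pq(1)] last_in_set by fastforce
    then show False using \<open>v \<notin> S'\<close> f[OF pq(1)] by simp
  qed
  then show "card (f ` Ps) = card Ps" by (rule card_image)
qed

lemma card_fan_le_card:
  assumes fan: "fan V E v S Ps" and "v \<notin> S" "finite S"
  shows "card Ps \<le> card S"
proof -
  have "inj_on last Ps"
  proof (rule inj_onI, rule ccontr)
    fix p q assume pq: "p \<in> Ps" "q \<in> Ps" "last p = last q" "p \<noteq> q"
    then have "p \<noteq> []" "q \<noteq> []" using fan unfolding fan_def is_path_def by auto
    then have "last p \<in> set p \<inter> set q" using pq(3) by (metis IntI last_in_set)
    then have "last p = v" using fan pq unfolding fan_def by blast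
    then show False using assms pq unfolding fan_def by auto
  qed
  moreover have "last ` Ps \<subseteq> S" using fan unfolding fan_def by auto
  ultimately show ?thesis using \<open>finite S\<close> card_inj_on_le by blast
qed

lemma card_fan_le_degree:
  assumes fan: "fan V E v S Ps" and "v \<notin> S" and nbrs: "finite {u. {u, v} \<in> E}"
  shows "card Ps \<le> degree E v"
proof -
  have second: "{p ! 1, v} \<in> E \<and> p ! 1 \<in> set p \<and> p ! 1 \<noteq> v" if "p \<in> Ps" for p
  proof -
    have p: "is_path V E p" "hd p = v" "last p \<in> S" using fan that unfolding fan_def by auto
    then have "p \<noteq> []" unfolding is_path_def by simp
    moreover have "p \<noteq> [v]" using p(3) \<open>v \<notin> S\<close> by (intro notI) simp
    ultimately have "1 < length p" using p(2) by (cases p) auto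
    moreover have "p ! 0 = v" using p(2) \<open>p \<noteq> []\<close> by (simp add: hd_conv_nth)
    ultimately show ?thesis using p(1) unfolding is_path_def
      by (auto simp: insert_commute nth_eq_iff_index_eq)
  qed
  have "inj_on (\<lambda>p. p ! 1) Ps"
  proof (rule inj_onI, rule ccontr)
    fix p q assume pq: "p \<in> Ps" "q \<in> Ps" "p ! 1 = q ! 1" "p \<noteq> q"
    then have "set p \<inter> set q = {v}" using fan unfolding fan_def by blast
    then show False using second[OF pq(1)] second[OF pq(2)] pq(3) by auto
  qed
  moreover have "(\<lambda>p. p ! 1) ` Ps \<subseteq> {u. {u, v} \<in> E}" using second by auto
  ultimately show ?thesis unfolding degree_def using nbrs card_inj_on_le by blast
qed

lemma card_fan_le_index:
  assumes "fan V E (vs ! k) (set (take k vs)) Ps" "distinct vs" "k < length vs"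
  shows "card Ps \<le> k"
  using card_fan_le_card[OF assms(1) nth_notin_set_take[OF assms(2,3)]] card_length[of "take k vs"]
  by simp

lemma finite_fan_cards:
  assumes "distinct vs" "k < length vs"
  shows "finite {card Ps | Ps. fan V E (vs ! k) (set (take k vs)) Ps}"
  by (rule finite_subset[of _ "{..k}"]) (use card_fan_le_index[OF _ assms] in auto)

lemma card_fan_le_backconn:
  assumes "fan V E (vs ! k) (set (take k vs)) Ps" "distinct vs" "k < length vs"
  shows "card Ps \<le> backconn V E vs k"
  unfolding backconn_def using assms finite_fan_cards[OF assms(2,3)] by (intro Max_ge) auto

lemma backconn_leI:
  assumes "\<And>Ps. fan V E (vs ! k) (set (take k vs)) Ps \<Longrightarrow> card Ps \<le> B" "distinct vs" "k < length vs"
  shows "backconn V E vs k \<le> B"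
proof -
  have "fan V E (vs ! k) (set (take k vs)) {}" unfolding fan_def by simp
  then show ?thesis unfolding backconn_def using assms finite_fan_cards[OF assms(2,3)]
    by (subst Max_le_iff) auto
qed

lemma backconn_mono:
  assumes "E \<subseteq> E'" "distinct vs" "k < length vs"
  shows "backconn V E vs k \<le> backconn V E' vs k"
  using assms fan_mono[OF _ assms(1)] card_fan_le_backconn by (blast intro: backconn_leI)

lemma backconn_append_left:
  assumes E1: "\<forall>e\<in>E1. e \<subseteq> V1" and E2: "\<forall>e\<in>E2. e \<subseteq> V2" and K: "is_clique E1 (V1 \<inter> V2)"
    and vs1: "set vs1 = V1" and dist: "distinct (vs1 @ ws)" and k: "k < length vs1"
  shows "backconn V (E1 \<union> E2) (vs1 @ ws) k \<le> backconn V1 E1 vs1 k"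
proof (rule backconn_leI[OF _ dist])
  let ?v = "vs1 ! k" and ?S = "set (take k vs1)" and ?f = "filter (\<lambda>x. x \<in> V1)"
  fix Ps assume "fan V (E1 \<union> E2) ((vs1 @ ws) ! k) (set (take k (vs1 @ ws))) Ps"
  then have fan: "fan V (E1 \<union> E2) ?v ?S Ps" using k by (simp add: nth_append)
  have "distinct vs1" using dist by simp
  then have v: "?v \<in> V1" "?v \<notin> ?S"
    using nth_mem[OF k] nth_notin_set_take[OF _ k] unfolding vs1 by blast+
  have S: "?S \<subseteq> V1" unfolding vs1[symmetric] by (rule set_take_subset)
  have "is_path V1 E1 (?f p) \<and> set (?f p) \<subseteq> set p \<and> hd (?f p) = ?v \<and> last (?f p) \<in> ?S"
    if "p \<in> Ps" for p
  proof (intro conjI)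
    have p: "is_path V (E1 \<union> E2) p" "hd p = ?v" "last p \<in> ?S"
      using fan that unfolding fan_def by blast+
    have ne: "p \<noteq> []" using p(1) unfolding is_path_def by blast
    have "last p \<in> V1" using p(3) S by blast
    then show "is_path V1 E1 (?f p)" by (rule is_path_filter_side[OF E1 E2 K p(1)])
    show "set (?f p) \<subseteq> set p" by auto
    show "hd (?f p) = ?v" using hd_filter[OF ne, of "\<lambda>x. x \<in> V1"] p(2) v(1) by simp
    show "last (?f p) \<in> ?S"
      using last_filter[OF ne, of "\<lambda>x. x \<in> V1"] \<open>last p \<in> V1\<close> p(3) by simp
  qed
  note shrink = fan_image[where f = ?f, OF fan v(2) this]
  have "card Ps = card (?f ` Ps)" using shrink(2) by simp
  also have "\<dots> \<le> backconn V1 E1 vs1 k"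
    by (rule card_fan_le_backconn[OF shrink(1) \<open>distinct vs1\<close> k])
  finally show "card Ps \<le> backconn V1 E1 vs1 k" .
qed (use k in simp)

lemma backconn_append_right:
  assumes E1: "\<forall>e\<in>E1. e \<subseteq> V1" and E2: "\<forall>e\<in>E2. e \<subseteq> V2"
    and vs1: "set vs1 = V1" and ks: "set ks = V1 \<inter> V2"
    and dist1: "distinct (vs1 @ ws)" and dist2: "distinct (ks @ ws)" and i: "i < length ws"
  shows "backconn (V1 \<union> V2) (E1 \<union> E2) (vs1 @ ws) (length vs1 + i)
    \<le> backconn V2 E2 (ks @ ws) (length ks + i)"
proof (rule backconn_leI[OF _ dist1])
  let ?v = "ws ! i" and ?S = "V1 \<union> set (take i ws)" and ?S' = "(V1 \<inter> V2) \<union> set (take i ws)"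
  fix Ps assume "fan (V1 \<union> V2) (E1 \<union> E2) ((vs1 @ ws) ! (length vs1 + i))
    (set (take (length vs1 + i) (vs1 @ ws))) Ps"
  then have fan: "fan (V1 \<union> V2) (E1 \<union> E2) ?v ?S Ps" by (simp add: vs1)
  have "distinct ws" "set vs1 \<inter> set ws = {}" using dist1 by auto
  then have v: "?v \<notin> V1" "?v \<notin> ?S'"
    using nth_mem[OF i] nth_notin_set_take[OF _ i] unfolding vs1 by blast+
  have "\<forall>p\<in>Ps. \<exists>q. is_path (V1 \<union> V2) (E1 \<union> E2) q \<and> set q \<subseteq> set p \<and> hd q = hd p \<and> last q \<in> ?S
      \<and> (\<forall>x\<in>set (butlast q). x \<notin> ?S)"
  proof
    fix p assume "p \<in> Ps"
    then have "is_path (V1 \<union> V2) (E1 \<union> E2) p" "last p \<in> ?S" using fan unfolding fan_def by blast+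
    then obtain q where "is_path (V1 \<union> V2) (E1 \<union> E2) q" "set q \<subseteq> set p" "hd q = hd p"
      "last q \<in> ?S" "\<forall>x\<in>set (butlast q). x \<notin> ?S"
      by (rule is_path_first_entry)
    then show "\<exists>q. is_path (V1 \<union> V2) (E1 \<union> E2) q \<and> set q \<subseteq> set p \<and> hd q = hd p \<and> last q \<in> ?S
      \<and> (\<forall>x\<in>set (butlast q). x \<notin> ?S)" by blast
  qed
  then obtain g where g: "\<forall>p\<in>Ps. is_path (V1 \<union> V2) (E1 \<union> E2) (g p) \<and> set (g p) \<subseteq> set p
      \<and> hd (g p) = hd p \<and> last (g p) \<in> ?S \<and> (\<forall>x\<in>set (butlast (g p)). x \<notin> ?S)"
    by (auto dest: bchoice)
  have "is_path V2 E2 (g p) \<and> set (g p) \<subseteq> set p \<and> hd (g p) = ?v \<and> last (g p) \<in> ?S'"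
    if "p \<in> Ps" for p
  proof -
    note gp = g[rule_format, OF that]
    have "hd (g p) = hd p" using gp by blast
    also have "hd p = ?v" using fan that unfolding fan_def by blast
    finally have hd: "hd (g p) = ?v" .
    have "hd (g p) \<notin> V1" using hd v(1) by simp
    moreover have "\<forall>x\<in>set (butlast (g p)). x \<notin> V1" using gp by blast
    ultimately have path: "is_path V2 E2 (g p)"
      using is_path_other_side[OF E1 E2] gp by blast
    then have "last (g p) \<in> V2" using last_in_set[of "g p"] unfolding is_path_def by blast
    then show ?thesis using path gp hd by blast
  qed
  note cut = fan_image[where f = g, OF fan v(2) this]
  have "set (take (length ks + i) (ks @ ws)) = ?S'" by (simp add: ks)
  moreover have "(ks @ ws) ! (length ks + i) = ?v" by simp
  ultimately have "fan V2 E2 ((ks @ ws) ! (length ks + i)) (set (take (length ks + i) (ks @ ws))) (g ` Ps)"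
    using cut(1) by simp
  then have "card (g ` Ps) \<le> backconn V2 E2 (ks @ ws) (length ks + i)"
    by (rule card_fan_le_backconn[OF _ dist2]) (use i in simp)
  then show "card Ps \<le> backconn V2 E2 (ks @ ws) (length ks + i)" using cut(2) by simp
qed (use i in simp)

definition bounded_ordering_after :: "nat \<Rightarrow> 'a set \<Rightarrow> 'a set set \<Rightarrow> 'a set \<Rightarrow> bool" where
  "bounded_ordering_after T V E Q \<longleftrightarrow> (\<exists>qs ws. is_ordering V (qs @ ws) \<and> set qs = Q \<and>
     (\<forall>i<length ws. backconn V E (qs @ ws) (length qs + i) \<le> T))"

definition clique_first_bounded :: "nat \<Rightarrow> 'a set \<Rightarrow> 'a set set \<Rightarrow> bool" where
  "clique_first_bounded T V E \<longleftrightarrow> (\<forall>Q. Q \<subseteq> V \<longrightarrow> is_clique E Q \<longrightarrow> bounded_ordering_after T V E Q)"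

lemma bounded_ordering_after_mono:
  assumes "bounded_ordering_after T V E' Q" "E \<subseteq> E'"
  shows "bounded_ordering_after T V E Q"
proof -
  obtain qs ws where o: "is_ordering V (qs @ ws)" "set qs = Q"
    and b: "\<forall>i<length ws. backconn V E' (qs @ ws) (length qs + i) \<le> T"
    using assms(1) unfolding bounded_ordering_after_def by blast
  have "backconn V E (qs @ ws) (length qs + i) \<le> T" if "i < length ws" for i
    using backconn_mono[OF assms(2), of "qs @ ws" "length qs + i" V] o(1) b that
    unfolding is_ordering_def by fastforce
  then show ?thesis using o unfolding bounded_ordering_after_def by blast
qed

lemma bounded_ordering_after_clique_sum:
  assumes g1: "graph V1 E1" and g2: "graph V2 E2" and K: "is_clique E1 (V1 \<inter> V2)"
    and o1: "bounded_ordering_after T V1 E1 Q" and o2: "bounded_ordering_after T V2 E2 (V1 \<inter> V2)"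
  shows "bounded_ordering_after T (V1 \<union> V2) (E1 \<union> E2) Q"
proof -
  obtain qs ws1 where ord1: "is_ordering V1 (qs @ ws1)" and qs: "set qs = Q"
    and b1: "\<forall>i<length ws1. backconn V1 E1 (qs @ ws1) (length qs + i) \<le> T"
    using o1 unfolding bounded_ordering_after_def by blast
  obtain ks ws2 where ord2: "is_ordering V2 (ks @ ws2)" and ks: "set ks = V1 \<inter> V2"
    and b2: "\<forall>i<length ws2. backconn V2 E2 (ks @ ws2) (length ks + i) \<le> T"
    using o2 unfolding bounded_ordering_after_def by blast
  have E1: "\<forall>e\<in>E1. e \<subseteq> V1" and E2: "\<forall>e\<in>E2. e \<subseteq> V2"
    using g1 g2 by (simp_all add: graph_edges_subset)
  have vs1: "set (qs @ ws1) = V1" "distinct (qs @ ws1)" using ord1 unfolding is_ordering_def by auto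
  have vs2: "set (ks @ ws2) = V2" "distinct (ks @ ws2)" using ord2 unfolding is_ordering_def by auto
  have "set ws2 \<inter> V1 = {}" using vs2 ks by auto
  then have dist: "distinct ((qs @ ws1) @ ws2)" using vs1 vs2 by auto
  have "set ((qs @ ws1) @ ws2) = V1 \<union> V2" using vs1 vs2 ks by auto
  with dist have ord: "is_ordering (V1 \<union> V2) (qs @ ws1 @ ws2)" unfolding is_ordering_def by simp
  have "backconn (V1 \<union> V2) (E1 \<union> E2) (qs @ ws1 @ ws2) (length qs + i) \<le> T"
    if i: "i < length (ws1 @ ws2)" for i
  proof (cases "i < length ws1")
    case True
    have "backconn (V1 \<union> V2) (E1 \<union> E2) ((qs @ ws1) @ ws2) (length qs + i)
        \<le> backconn V1 E1 (qs @ ws1) (length qs + i)"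
      by (rule backconn_append_left[OF E1 E2 K vs1(1) dist]) (use True in simp)
    then show ?thesis using b1 True by (simp add: order_trans)
  next
    case False
    define j where "j = i - length ws1"
    have j: "j < length ws2" "length qs + i = length (qs @ ws1) + j" using i False by (auto simp: j_def)
    have "backconn (V1 \<union> V2) (E1 \<union> E2) ((qs @ ws1) @ ws2) (length (qs @ ws1) + j)
        \<le> backconn V2 E2 (ks @ ws2) (length ks + j)"
      by (rule backconn_append_right[OF E1 E2 vs1(1) ks dist vs2(2) j(1)])
    then show ?thesis using b2 j by (simp add: add.assoc order_trans)
  qed
  then show ?thesis using ord qs unfolding bounded_ordering_after_def by blast
qed

lemma clique_subset_side:
  assumes "\<forall>e\<in>E1. e \<subseteq> V1" "\<forall>e\<in>E2. e \<subseteq> V2" "Q \<subseteq> V1 \<union> V2" "is_clique (E1 \<union> E2) Q"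
  shows "Q \<subseteq> V1 \<or> Q \<subseteq> V2"
proof (rule ccontr)
  assume "\<not> (Q \<subseteq> V1 \<or> Q \<subseteq> V2)"
  then obtain x y where "x \<in> Q" "x \<notin> V1" "y \<in> Q" "y \<notin> V2" by blast
  moreover have "x \<noteq> y" using calculation assms(3) by blast
  ultimately have "{x, y} \<in> E1 \<union> E2" using assms(4) unfolding is_clique_def by blast
  then show False using assms(1,2) \<open>x \<notin> V1\<close> \<open>y \<notin> V2\<close> by blast
qed

lemma is_clique_side:
  assumes "\<forall>e\<in>E2. e \<subseteq> V2" "is_clique E1 (V1 \<inter> V2)" "Q \<subseteq> V1" "is_clique (E1 \<union> E2) Q"
  shows "is_clique E1 Q"
  unfolding is_clique_def
proof (intro ballI impI)
  fix u v assume uv: "u \<in> Q" "v \<in> Q" "u \<noteq> v"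
  then have "{u, v} \<in> E1 \<or> {u, v} \<in> E2" using assms(4) unfolding is_clique_def by blast
  then show "{u, v} \<in> E1"
  proof
    assume "{u, v} \<in> E2"
    then have "u \<in> V1 \<inter> V2" "v \<in> V1 \<inter> V2" using assms(1,3) uv by blast+
    then show ?thesis using assms(2) uv(3) unfolding is_clique_def by blast
  qed
qed

lemma clique_first_bounded_clique_sum:
  assumes g1: "graph V1 E1" and g2: "graph V2 E2"
    and K1: "is_clique E1 (V1 \<inter> V2)" and K2: "is_clique E2 (V1 \<inter> V2)"
    and c1: "clique_first_bounded T V1 E1" and c2: "clique_first_bounded T V2 E2"
  shows "clique_first_bounded T (V1 \<union> V2) (E1 \<union> E2 - F)"
  unfolding clique_first_bounded_def
proof (intro allI impI)
  fix Q assume Q: "Q \<subseteq> V1 \<union> V2" "is_clique (E1 \<union> E2 - F) Q"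
  have E1: "\<forall>e\<in>E1. e \<subseteq> V1" and E2: "\<forall>e\<in>E2. e \<subseteq> V2"
    using g1 g2 by (simp_all add: graph_edges_subset)
  have Q12: "is_clique (E1 \<union> E2) Q" using Q(2) is_clique_mono by blast
  have K: "V1 \<inter> V2 \<subseteq> V1" "V1 \<inter> V2 \<subseteq> V2" by auto
  have "bounded_ordering_after T (V1 \<union> V2) (E1 \<union> E2) Q"
    using clique_subset_side[OF E1 E2 Q(1) Q12]
  proof
    assume "Q \<subseteq> V1"
    then have "bounded_ordering_after T V1 E1 Q"
      using c1 is_clique_side[OF E2 K1 _ Q12] unfolding clique_first_bounded_def by blast
    moreover have "bounded_ordering_after T V2 E2 (V1 \<inter> V2)"
      using c2 K2 K(2) unfolding clique_first_bounded_def by blast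
    ultimately show ?thesis by (rule bounded_ordering_after_clique_sum[OF g1 g2 K1])
  next
    assume "Q \<subseteq> V2"
    then have "bounded_ordering_after T V2 E2 Q"
      using c2 is_clique_side[of E1 V1 E2 V2] E1 K2 Q12 unfolding clique_first_bounded_def
      by (metis Int_commute Un_commute)
    moreover have "bounded_ordering_after T V1 E1 (V2 \<inter> V1)"
      using c1 K1 K(1) unfolding clique_first_bounded_def by (metis Int_commute)
    ultimately have "bounded_ordering_after T (V2 \<union> V1) (E2 \<union> E1) Q"
      using bounded_ordering_after_clique_sum[OF g2 g1] K2 by (metis Int_commute)
    then show ?thesis by (simp add: Un_commute)
  qed
  then show "bounded_ordering_after T (V1 \<union> V2) (E1 \<union> E2 - F) Q"
    by (rule bounded_ordering_after_mono) blast
qed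

lemma card_clique_le_Suc_degree:
  assumes g: "graph V E" and Q: "is_clique E Q" "Q \<subseteq> V" and v: "v \<in> Q"
  shows "card Q \<le> Suc (degree E v)"
proof -
  have "finite Q" using Q(2) graph_finite[OF g] by (rule finite_subset)
  have "Q - {v} \<subseteq> {u. {u, v} \<in> E}" using Q(1) v unfolding is_clique_def by blast
  then have "card (Q - {v}) \<le> degree E v"
    unfolding degree_def by (rule card_mono[OF finite_neighbours[OF g]])
  then show ?thesis using \<open>finite Q\<close> v by (simp add: card_Diff_singleton)
qed

lemma card_clique_le:
  assumes g: "graph V E" and Q: "is_clique E Q" "Q \<subseteq> V"
  shows "card Q \<le> card {v \<in> V. D < degree E v} + D + 1"
proof (cases "Q \<subseteq> {v \<in> V. D < degree E v}")
  case True
  have "card Q \<le> card {v \<in> V. D < degree E v}"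
    by (rule card_mono) (use graph_finite[OF g] True in auto)
  then show ?thesis by simp
next
  case False
  then obtain v where "v \<in> Q" "\<not> (v \<in> V \<and> D < degree E v)" by blast
  then have "v \<in> Q" "degree E v \<le> D" using Q(2) by auto
  then show ?thesis using card_clique_le_Suc_degree[OF g Q] by fastforce
qed

lemma clique_first_bounded_few_high_degree:
  fixes D a :: nat
  assumes g: "graph V E" and few: "card {v \<in> V. D < degree E v} \<le> a"
  shows "clique_first_bounded (2 * a + D) V E"
  unfolding clique_first_bounded_def
proof (intro allI impI)
  fix Q assume Q: "Q \<subseteq> V" "is_clique E Q"
  define H where "H = {v \<in> V. D < degree E v}"
  have "finite V" by (rule graph_finite[OF g])
  then have "finite H" unfolding H_def by simp
  obtain qs where qs: "set qs = Q" "distinct qs"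
    using finite_distinct_list[OF finite_subset[OF Q(1) \<open>finite V\<close>]] by blast
  obtain hs where hs: "set hs = H - Q" "distinct hs"
    using finite_distinct_list[OF finite_Diff[OF \<open>finite H\<close>]] by blast
  obtain ls where ls: "set ls = V - Q - H" "distinct ls"
    using finite_distinct_list[OF finite_Diff[OF finite_Diff[OF \<open>finite V\<close>]]] by blast
  have ord: "is_ordering V (qs @ hs @ ls)"
    using qs hs ls Q(1) unfolding is_ordering_def H_def by auto
  then have dist: "distinct (qs @ hs @ ls)" unfolding is_ordering_def by blast
  have "card Q \<le> card H + D + 1" unfolding H_def by (rule card_clique_le[OF g Q(2,1)])
  moreover have "card (H - Q) \<le> card H" by (rule card_mono[OF \<open>finite H\<close>]) blast
  moreover have "length qs = card Q" "length hs = card (H - Q)"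
    using distinct_card[OF qs(2)] distinct_card[OF hs(2)] qs(1) hs(1) by simp_all
  ultimately have early: "length qs + length hs \<le> 2 * a + D + 1" using few unfolding H_def by linarith
  have "backconn V E (qs @ hs @ ls) (length qs + i) \<le> 2 * a + D" if i: "i < length (hs @ ls)" for i
  proof (rule backconn_leI[OF _ dist])
    let ?k = "length qs + i"
    fix Ps assume fan: "fan V E ((qs @ hs @ ls) ! ?k) (set (take ?k (qs @ hs @ ls))) Ps"
    show "card Ps \<le> 2 * a + D"
    proof (cases "i < length hs")
      case True
      then show ?thesis using card_fan_le_index[OF fan dist] i early by simp
    next
      case False
      then have "(qs @ hs @ ls) ! ?k = ls ! (i - length hs)" "i - length hs < length ls"
        using i by (simp_all add: nth_append)
      then have "(qs @ hs @ ls) ! ?k \<in> V - H" using ls nth_mem by fastforce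
      then have "degree E ((qs @ hs @ ls) ! ?k) \<le> D" unfolding H_def by (simp add: not_less)
      moreover have "card Ps \<le> degree E ((qs @ hs @ ls) ! ?k)"
        using card_fan_le_degree[OF fan nth_notin_set_take[OF dist] finite_neighbours[OF g]] i by simp
      ultimately show ?thesis by simp
    qed
  qed (use i in simp)
  then show "bounded_ordering_after (2 * a + D) V E Q"
    using ord qs(1) unfolding bounded_ordering_after_def by blast
qed

lemma inf_admissibility_le:
  assumes V: "finite V" and vs: "is_ordering V vs" and b: "\<forall>k<length vs. backconn V E vs k \<le> T"
  shows "inf_admissibility V E \<le> T"
proof -
  have "{adm_ordering V E vs | vs. is_ordering V vs}
      \<subseteq> adm_ordering V E ` {xs. set xs \<subseteq> V \<and> length xs \<le> card V}"
    unfolding is_ordering_def by (auto simp: distinct_card)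
  then have "finite {adm_ordering V E vs | vs. is_ordering V vs}"
    by (rule finite_surj[OF finite_lists_length_le[OF V]])
  then have "inf_admissibility V E \<le> adm_ordering V E vs"
    unfolding inf_admissibility_def using vs by (intro Min_le) auto
  also have "adm_ordering V E vs \<le> T"
    unfolding adm_ordering_def using b by (subst Max_le_iff) auto
  finally show ?thesis .
qed

theorem theorem6:
  fixes D a :: int
  shows "\<exists>T::nat. \<forall>(V::'a set) E.
     clique_sum_of (\<lambda>V' E'. int (card {v \<in> V'. int (degree E' v) > D}) \<le> a) V E
     \<longrightarrow> inf_admissibility V E \<le> T"
proof (intro exI allI impI)
  let ?T = "2 * nat a + nat D"
  fix V :: "'a set" and E
  assume "clique_sum_of (\<lambda>V' E'. int (card {v \<in> V'. int (degree E' v) > D}) \<le> a) V E"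
  then have "graph V E \<and> clique_first_bounded ?T V E"
  proof induction
    case (base V E)
    txt \<open>Only an inclusion: for negative D every vertex counts as high-degree on the right.\<close>
    have "card {v \<in> V. nat D < degree E v} \<le> card {v \<in> V. int (degree E v) > D}"
      by (rule card_mono) (use graph_finite[OF base.hyps(1)] in auto)
    then have "card {v \<in> V. nat D < degree E v} \<le> nat a" using base.hyps(2) by linarith
    then show ?case using base.hyps(1) clique_first_bounded_few_high_degree by blast
  next
    case (sum V1 E1 V2 E2 K F)
    then show ?case using graph_clique_sum clique_first_bounded_clique_sum by metis
  qed
  then have g: "graph V E" and "bounded_ordering_after ?T V E {}"
    unfolding clique_first_bounded_def is_clique_def by blast+
  then obtain qs ws where "is_ordering V (qs @ ws)" "set qs = {}"
    "\<forall>i<length ws. backconn V E (qs @ ws) (length qs + i) \<le> ?T"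
    unfolding bounded_ordering_after_def by blast
  then show "inf_admissibility V E \<le> ?T" by (simp add: inf_admissibility_le[OF graph_finite[OF g]])
qed

end
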